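(* Let $p$ be a prime, let $G$ be a finite soluble group with $O_p(G)=1$, and let $A$ be a non-empty normal subset of $G$ consisting of elements of order $p$ such that every element of $A^2=\{xy\mid x,y\in A\}$ is a $p$-element. Let $a\in A\setminus G'$ and $c\in G'$, and suppose that $X=\langle c,a\rangle$ is elementary abelian of order $p^2$. Then $|a^G\cap X|<p$.
   Context: A normal subset of $G$ is a subset closed under conjugation by elements of $G$. $O_p(G)$ is the largest normal $p$-subgroup of $G$, $G'$ is the derived subgroup, and $a^G$ is the conjugacy class of $a$. *)

theory Defs
  imports "HOL-Algebra.Algebra" "HOL-Algebra.Multiplicative_Group"
begin

definition p_subgroup :: "nat \<Rightarrow> 'a set \<Rightarrow> ('a, 'b) monoid_scheme \<Rightarrow> bool" where
  "p_subgroup p H G \<longleftrightarrow> subgroup H G \<and> (\<exists>k. card H = p ^ k)"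

(* O_p(G) = 1: the largest normal p-subgroup is trivial, i.e. every normal p-subgroup is trivial *)
definition Op_trivial :: "nat \<Rightarrow> ('a, 'b) monoid_scheme \<Rightarrow> bool" where
  "Op_trivial p G \<longleftrightarrow> (\<forall>N. p_subgroup p N G \<and> N \<lhd> G \<longrightarrow> N = {\<one>\<^bsub>G\<^esub>})"

definition p_element :: "nat \<Rightarrow> ('a, 'b) monoid_scheme \<Rightarrow> 'a \<Rightarrow> bool" where
  "p_element p G x \<longleftrightarrow> x \<in> carrier G \<and> (\<exists>k. group.ord G x = p ^ k)"

definition normal_subset :: "'a set \<Rightarrow> ('a, 'b) monoid_scheme \<Rightarrow> bool" where
  "normal_subset A G \<longleftrightarrow> A \<subseteq> carrier G \<and>
     (\<forall>g\<in>carrier G. \<forall>x\<in>A. g \<otimes>\<^bsub>G\<^esub> x \<otimes>\<^bsub>G\<^esub> inv\<^bsub>G\<^esub> g \<in> A)"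

definition conj_class :: "('a, 'b) monoid_scheme \<Rightarrow> 'a \<Rightarrow> 'a set" where
  "conj_class G a = {g \<otimes>\<^bsub>G\<^esub> a \<otimes>\<^bsub>G\<^esub> inv\<^bsub>G\<^esub> g | g. g \<in> carrier G}"

definition elem_abelian_of_order :: "nat \<Rightarrow> nat \<Rightarrow> 'a set \<Rightarrow> ('a, 'b) monoid_scheme \<Rightarrow> bool" where
  "elem_abelian_of_order p n H G \<longleftrightarrow> subgroup H G \<and> card H = p ^ n \<and>
     (\<forall>x\<in>H. \<forall>y\<in>H. x \<otimes>\<^bsub>G\<^esub> y = y \<otimes>\<^bsub>G\<^esub> x) \<and>
     (\<forall>x\<in>H. x [^]\<^bsub>G\<^esub> p = \<one>\<^bsub>G\<^esub>)"

end

theory Submission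
  imports Defs
begin

(*
  Conjugates of a lie in the coset a G'.  Since a is not in G' but c is, the elements of
  X = <c, a> in this coset are the p elements a c^j, so if the bound failed every a c^j would
  be conjugate to a and hence lie in A.  This forces c = 1.

  Let u lie in a normal subgroup V of order prime to p.  If u centralizes some a c^m, choose
  i + j = 2 m (mod p): then a c^i and a c^j are commuting elements of A with product
  (a c^m)^2, and as products of two elements of A are p-elements, u centralizes every a c^j,
  hence c.  If V is moreover abelian, the p-th power of any element of V is a product of
  elements fixed by one of the p + 1 subgroups of order p of X (orbit products), so c
  centralizes V.  Descending the derived series of V and passing to G / U' at each step, c
  centralizes every normal p'-subgroup.  But in a soluble group with O_p(G) = 1 the
  centralizer of the largest normal p'-subgroup lies inside it (Hall-Higman), so c, which has
  order p, cannot centralize it.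
*)

lemma eq_prime_power_of_prime_divisors:
  fixes n p :: nat
  assumes "0 < n" "Factorial_Ring.prime p"
    and "\<And>q. Factorial_Ring.prime q \<Longrightarrow> q dvd n \<Longrightarrow> q = p"
  shows "\<exists>k. n = p ^ k"
proof -
  obtain m where m: "n = p ^ multiplicity p n * m" "\<not> p dvd m"
    using multiplicity_decompose'[of n p] assms(1,2) prime_gt_1_nat[OF assms(2)] by auto
  have "m = 1"
  proof (rule ccontr)
    assume "m \<noteq> 1"
    then obtain q where "Factorial_Ring.prime q" "q dvd m"
      using prime_factor_nat by blast
    then show False
      using assms(3)[of q] m by (metis dvd_mult)
  qed
  then show ?thesis
    using m by auto
qed

lemma dvd_add_pred_imp_eq_1:
  fixes i p :: nat
  assumes "1 < p" "i < p" "p dvd i + (p - 1)"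
  shows "i = 1"
proof (rule ccontr)
  assume "i \<noteq> 1"
  then consider "i = 0" | "2 \<le> i"
    by linarith
  then show False
  proof cases
    case 1
    then show False
      using assms nat_dvd_not_less[of "p - 1" p] by simp
  next
    case 2
    then have "p + (i - 1) = i + (p - 1)"
      using assms(1) by linarith
    then have "p dvd p + (i - 1)"
      using assms(3) by simp
    then have "p dvd i - 1"
      by (simp add: dvd_add_right_iff)
    moreover have "0 < i - 1" "i - 1 < p"
      using 2 assms(2) by linarith+
    ultimately show False
      using nat_dvd_not_less by blast
  qed
qed

lemma bij_betw_mult_mod_prime:
  fixes p k :: nat
  assumes p: "Factorial_Ring.prime p" and k: "\<not> p dvd k"
  shows "bij_betw (\<lambda>j. j * k mod p) {..<p} {..<p}"
proof -
  have le_imp_eq: "i = j" if "j \<le> i" "i < p" "i * k mod p = j * k mod p" for i j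
  proof -
    have "p dvd (i - j) * k"
      using that mod_eq_dvd_iff_nat[of "j * k" "i * k" p] by (simp add: diff_mult_distrib)
    then have "p dvd i - j"
      using p k prime_dvd_mult_iff by blast
    moreover have "i - j < p"
      using that by linarith
    ultimately show "i = j"
      using that nat_dvd_not_less[of "i - j" p] by linarith
  qed
  have "inj_on (\<lambda>j. j * k mod p) {..<p}"
  proof (rule inj_onI)
    fix i j assume "i \<in> {..<p}" "j \<in> {..<p}" "i * k mod p = j * k mod p"
    then show "i = j"
      using le_imp_eq[of j i] le_imp_eq[of i j] by (cases "j \<le> i") auto
  qed
  moreover have "(\<lambda>j. j * k mod p) ` {..<p} \<subseteq> {..<p}"
    using prime_gt_0_nat[OF p] by auto
  ultimately show ?thesis
    by (simp add: bij_betw_def endo_inj_surj)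
qed

lemma bij_betw_Suc_mod:
  assumes "0 < n"
  shows "bij_betw (\<lambda>k. Suc k mod n) {..<n} {..<n}"
proof -
  have "inj_on (\<lambda>k. Suc k mod n) {..<n}"
  proof (rule inj_onI)
    fix i j assume "i \<in> {..<n}" "j \<in> {..<n}" "Suc i mod n = Suc j mod n"
    then show "i = j"
      by (auto simp: mod_Suc split: if_splits)
  qed
  then show ?thesis
    using assms by (simp add: bij_betw_def endo_inj_surj image_subsetI)
qed

lemma (in comm_monoid) finprod_swap:
  assumes "finite S" "finite T" "\<And>i j. i \<in> S \<Longrightarrow> j \<in> T \<Longrightarrow> f i j \<in> carrier G"
  shows "(\<Otimes>i\<in>S. \<Otimes>j\<in>T. f i j) = (\<Otimes>j\<in>T. \<Otimes>i\<in>S. f i j)"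
  using assms
proof (induction S rule: finite_induct)
  case (insert x F)
  then have "(\<Otimes>i\<in>insert x F. \<Otimes>j\<in>T. f i j) = (\<Otimes>j\<in>T. f x j) \<otimes> (\<Otimes>j\<in>T. \<Otimes>i\<in>F. f i j)"
    by (simp add: Pi_def)
  also have "\<dots> = (\<Otimes>j\<in>T. f x j \<otimes> (\<Otimes>i\<in>F. f i j))"
    using insert.prems by (simp add: Pi_def finprod_multf)
  also have "\<dots> = (\<Otimes>j\<in>T. \<Otimes>i\<in>insert x F. f i j)"
    using insert by (intro finprod_cong') (auto simp: Pi_def)
  finally show ?case .
qed simp

lemma (in comm_group) finprod_subgroup_closed:
  assumes "subgroup H G" "f \<in> S \<rightarrow> H"
  shows "finprod G f S \<in> H"
proof (cases "finite S")
  case True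
  then show ?thesis
    using assms(2)
  proof (induction S rule: finite_induct)
    case (insert x F)
    have "f \<in> F \<rightarrow> carrier G" "f x \<in> carrier G"
      using insert.prems subgroup.subset[OF assms(1)] by auto
    then show ?case
      using insert subgroup.m_closed[OF assms(1)] by simp
  qed (simp add: subgroup.one_closed[OF assms(1)])
qed (simp add: subgroup.one_closed[OF assms(1)])

lemma (in comm_monoid) finprod_endomorphism:
  assumes "\<And>x y. x \<in> carrier G \<Longrightarrow> y \<in> carrier G \<Longrightarrow> \<phi> (x \<otimes> y) = \<phi> x \<otimes> \<phi> y"
    and "\<phi> \<one> = \<one>" and "f \<in> S \<rightarrow> carrier G" and "\<And>x. x \<in> carrier G \<Longrightarrow> \<phi> x \<in> carrier G"
  shows "\<phi> (finprod G f S) = finprod G (\<lambda>i. \<phi> (f i)) S"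
proof (cases "finite S")
  case True
  then show ?thesis
    using assms(3)
  proof (induction S rule: finite_induct)
    case (insert x F)
    then show ?case
      using assms(1,4) by (simp add: Pi_def)
  qed (simp add: assms(2))
qed (simp add: assms(2))

section \<open>Centralizers and commutators\<close>

definition centralizer :: "('a, 'b) monoid_scheme \<Rightarrow> 'a set \<Rightarrow> 'a set" where
  "centralizer G S = {g \<in> carrier G. \<forall>s\<in>S. g \<otimes>\<^bsub>G\<^esub> s = s \<otimes>\<^bsub>G\<^esub> g}"

lemma centralizer_carrier: "g \<in> centralizer G S \<Longrightarrow> g \<in> carrier G"
  unfolding centralizer_def mem_Collect_eq by (rule conjunct1)

lemma centralizerD:
  assumes "g \<in> centralizer G S" and "s \<in> S"
  shows "g \<otimes>\<^bsub>G\<^esub> s = s \<otimes>\<^bsub>G\<^esub> g"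
proof -
  have "\<forall>s\<in>S. g \<otimes>\<^bsub>G\<^esub> s = s \<otimes>\<^bsub>G\<^esub> g"
    using assms(1) unfolding centralizer_def mem_Collect_eq by (rule conjunct2)
  then show ?thesis
    using assms(2) by (rule bspec)
qed

lemma centralizer_singleton_iff:
  "g \<in> centralizer G {s} \<longleftrightarrow> g \<in> carrier G \<and> g \<otimes>\<^bsub>G\<^esub> s = s \<otimes>\<^bsub>G\<^esub> g"
  by (simp add: centralizer_def)

context group
begin

lemma inv_mult_cancel_left [simp]: "x \<in> carrier G \<Longrightarrow> y \<in> carrier G \<Longrightarrow> inv x \<otimes> (x \<otimes> y) = y"
  by (simp add: m_assoc[symmetric])

lemma mult_inv_cancel_left [simp]: "x \<in> carrier G \<Longrightarrow> y \<in> carrier G \<Longrightarrow> x \<otimes> (inv x \<otimes> y) = y"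
  by (simp add: m_assoc[symmetric])

lemma subgroup_nat_pow_closed: "subgroup H G \<Longrightarrow> h \<in> H \<Longrightarrow> h [^] (n::nat) \<in> H"
  using subgroup_int_pow_closed[of H h "int n"] by (simp add: int_pow_int)

lemma subgroup_centralizer:
  assumes "S \<subseteq> carrier G"
  shows "subgroup (centralizer G S) G"
proof (rule subgroupI)
  fix g assume g: "g \<in> centralizer G S"
  have "inv g \<otimes> s = s \<otimes> inv g" if s: "s \<in> S" for s
  proof -
    have c: "s \<in> carrier G" "g \<in> carrier G" and gs: "g \<otimes> s = s \<otimes> g"
      using s assms centralizer_carrier[OF g] centralizerD[OF g s] by auto
    then have "inv g \<otimes> s = inv g \<otimes> (s \<otimes> g) \<otimes> inv g"
      by (simp add: m_assoc)
    also have "\<dots> = s \<otimes> inv g"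
      using c by (simp add: gs[symmetric] m_assoc)
    finally show ?thesis .
  qed
  then show "inv g \<in> centralizer G S"
    using centralizer_carrier[OF g] by (simp add: centralizer_def)
next
  fix g h assume g: "g \<in> centralizer G S" and h: "h \<in> centralizer G S"
  have "g \<otimes> h \<otimes> s = s \<otimes> (g \<otimes> h)" if s: "s \<in> S" for s
  proof -
    have c: "s \<in> carrier G" "g \<in> carrier G" "h \<in> carrier G"
      using s assms centralizer_carrier[OF g] centralizer_carrier[OF h] by auto
    have "g \<otimes> h \<otimes> s = g \<otimes> (s \<otimes> h)"
      using c by (simp add: m_assoc centralizerD[OF h s])
    also have "\<dots> = s \<otimes> (g \<otimes> h)"
      using c by (simp add: m_assoc[symmetric] centralizerD[OF g s])
    finally show ?thesis .
  qed
  then show "g \<otimes> h \<in> centralizer G S"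
    using centralizer_carrier[OF g] centralizer_carrier[OF h] by (simp add: centralizer_def)
next
  have "\<one> \<in> centralizer G S"
    using assms by (auto simp: centralizer_def)
  then show "centralizer G S \<noteq> {}"
    by blast
qed (auto simp: centralizer_def)

lemma normal_centralizer:
  assumes "N \<lhd> G"
  shows "centralizer G N \<lhd> G"
proof (rule normal_invI)
  show "subgroup (centralizer G N) G"
    using assms by (simp add: normal_imp_subgroup subgroup.subset subgroup_centralizer)
next
  fix x h assume x: "x \<in> carrier G" and h: "h \<in> centralizer G N"
  have "x \<otimes> h \<otimes> inv x \<otimes> n = n \<otimes> (x \<otimes> h \<otimes> inv x)" if n: "n \<in> N" for n
  proof -
    define n' where "n' = inv x \<otimes> n \<otimes> x"
    have n': "n' \<in> N"
      unfolding n'_def using normal.inv_op_closed1[OF assms x n] .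
    have c: "h \<in> carrier G" "n' \<in> carrier G"
      using centralizer_carrier[OF h] subgroup.mem_carrier[OF normal_imp_subgroup[OF assms] n'] .
    have hn': "h \<otimes> n' = n' \<otimes> h"
      using centralizerD[OF h n'] .
    have "n \<in> carrier G"
      using subgroup.mem_carrier[OF normal_imp_subgroup[OF assms] n] .
    then have n_eq: "n = x \<otimes> n' \<otimes> inv x"
      using x by (simp add: n'_def m_assoc)
    have "x \<otimes> h \<otimes> inv x \<otimes> n = x \<otimes> (h \<otimes> n') \<otimes> inv x"
      using x c by (simp add: n_eq m_assoc)
    also have "\<dots> = x \<otimes> (n' \<otimes> h) \<otimes> inv x"
      by (simp add: hn')
    also have "\<dots> = n \<otimes> (x \<otimes> h \<otimes> inv x)"
      using x c by (simp add: n_eq m_assoc)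
    finally show ?thesis .
  qed
  then show "x \<otimes> h \<otimes> inv x \<in> centralizer G N"
    using x centralizer_carrier[OF h] by (simp add: centralizer_def)
qed

lemma commute_of_commutator_eq_one:
  assumes "x \<in> carrier G" "y \<in> carrier G" "inv x \<otimes> inv y \<otimes> x \<otimes> y = \<one>"
  shows "x \<otimes> y = y \<otimes> x"
proof -
  have "inv (y \<otimes> x) \<otimes> (x \<otimes> y) = \<one>"
    using assms by (simp add: inv_mult_group m_assoc)
  then have "inv (x \<otimes> y) = inv (y \<otimes> x)"
    using assms(1,2) by (intro inv_equality) simp_all
  then show ?thesis
    using assms(1,2) by (metis inv_inv m_closed)
qed

lemma eq_one_of_prime_power_pow:
  assumes "x \<in> carrier G" "coprime (ord x) p" "x [^] (p ^ n) = \<one>"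
  shows "x = \<one>"
proof -
  have "ord x dvd p ^ n"
    using assms pow_eq_id by blast
  with assms(2) have "ord x = 1"
    using coprime_common_divisor_nat[of "ord x" "p ^ n" "ord x"] by simp
  then show ?thesis
    using assms(1) ord_eq_1 by blast
qed

lemma pow_prime_power_eq_one_mono:
  fixes p :: nat
  assumes "x \<in> carrier G" "x [^] (p ^ k) = \<one>" "k \<le> l"
  shows "x [^] (p ^ l) = \<one>"
proof -
  have "p ^ l = p ^ k * p ^ (l - k)"
    using assms(3) by (simp flip: power_add)
  then show ?thesis
    using assms(1,2) by (simp flip: nat_pow_pow)
qed

lemma eq_one_of_commuting_prime_power_pow:
  fixes p :: nat
  assumes "h \<in> carrier G" "w \<in> carrier G" "h \<otimes> w = w \<otimes> h" "coprime (ord w) p"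
    and "h [^] (p ^ k) = \<one>" "(h \<otimes> w) [^] (p ^ l) = \<one>"
  shows "w = \<one>"
proof -
  have "h [^] (p ^ (k + l)) = \<one>" "(h \<otimes> w) [^] (p ^ (k + l)) = \<one>"
    using pow_prime_power_eq_one_mono assms by simp_all
  then have "w [^] (p ^ (k + l)) = \<one>"
    using assms(1,2) by (simp add: pow_mult_distrib[OF assms(3)])
  then show ?thesis
    using eq_one_of_prime_power_pow assms(2,4) by blast
qed

lemma commuting_mult_nat_pow_pow_eq_one:
  assumes "a \<in> carrier G" "c \<in> carrier G" "a \<otimes> c = c \<otimes> a" "a [^] n = \<one>" "c [^] n = \<one>"
  shows "(a \<otimes> c [^] (j::nat)) [^] (n::nat) = \<one>"
proof -
  have "a \<otimes> c [^] j = c [^] j \<otimes> a"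
    using group_commutes_pow[OF assms(3)[symmetric] assms(2,1)] by simp
  then have "(a \<otimes> c [^] j) [^] n = a [^] n \<otimes> (c [^] j) [^] n"
    using pow_mult_distrib assms(1,2) by simp
  also have "\<dots> = a [^] n \<otimes> (c [^] n) [^] j"
    using assms(2) by (simp add: nat_pow_pow mult.commute)
  finally show ?thesis
    using assms(4,5) by simp
qed

lemma mem_subgroup_of_coprime_pow:
  assumes H: "subgroup H G" and x: "x \<in> carrier G" and n: "coprime n (ord x)" and xn: "x [^] n \<in> H"
  shows "x \<in> H"
proof (cases "n = 0")
  case True
  then have "x = \<one>"
    using n x ord_eq_1 by simp
  then show ?thesis
    using subgroup.one_closed[OF H] by simp
next
  case False
  then obtain s t where "n * s = ord x * t + gcd n (ord x)"
    using bezout_nat by blast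
  then have st: "n * s = ord x * t + 1"
    using n by simp
  have "x [^] (ord x * t) = \<one>"
    using x by (simp add: nat_pow_pow[symmetric])
  then have "(x [^] n) [^] s = x"
    using x by (simp add: nat_pow_pow st nat_pow_mult[symmetric])
  then show ?thesis
    using subgroup_nat_pow_closed[OF H xn, of s] by simp 
qed

lemma nat_pow_mod_eq:
  assumes "y \<in> carrier G" "y [^] n = \<one>"
  shows "y [^] (k mod n) = y [^] (k::nat)"
proof -
  have "y [^] k = (y [^] n) [^] (k div n) \<otimes> y [^] (k mod n)"
    using assms(1) by (simp add: nat_pow_pow nat_pow_mult mult_div_mod_eq)
  then show ?thesis
    using assms by simp
qed

lemma inv_eq_nat_pow:
  fixes n :: nat
  assumes "y \<in> carrier G" "y [^] n = \<one>" "0 < n"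
  shows "inv y = y [^] (n - 1)"
proof (rule inv_equality)
  have "y [^] (n - 1) \<otimes> y = y [^] Suc (n - 1)"
    by simp
  then show "y [^] (n - 1) \<otimes> y = \<one>"
    using assms(2) by (simp add: Suc_pred[OF assms(3)])
qed (use assms in simp_all)

lemma conj_nat_pow:
  assumes "l \<in> carrier G" "s \<in> carrier G"
  shows "(inv l \<otimes> s \<otimes> l) [^] (n::nat) = inv l \<otimes> s [^] n \<otimes> l"
proof (induction n)
  case (Suc n)
  then show ?case
    using assms by (simp add: m_assoc)
qed (use assms in simp)

lemma commutator_in_derived: "x \<in> H \<Longrightarrow> y \<in> H \<Longrightarrow> x \<otimes> y \<otimes> inv x \<otimes> inv y \<in> derived G H"
  unfolding derived_def by (rule generate.incl) blast

lemma rcos_eq_iff: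
  assumes "subgroup H G" "x \<in> carrier G" "y \<in> carrier G"
  shows "H #> x = H #> y \<longleftrightarrow> x \<otimes> inv y \<in> H"
proof
  assume "H #> x = H #> y"
  then have "x \<in> H #> y"
    using rcos_self[OF assms(2,1)] by simp
  then show "x \<otimes> inv y \<in> H"
    using subgroup.rcos_module_imp[OF assms(1) is_group assms(3)] by blast
next
  assume "x \<otimes> inv y \<in> H"
  then have "x \<in> H #> y"
    using subgroup.rcos_module_rev[OF assms(1) is_group assms(3,2)] by blast
  then show "H #> x = H #> y"
    using repr_independence[OF _ assms(3,1)] by simp
qed

lemma normal_exp_of_derived: "N \<lhd> G \<Longrightarrow> (derived G ^^ k) N \<lhd> G"
  by (induct k) (auto intro: derived_is_normal)

lemma exp_of_derived_subset: "subgroup H G \<Longrightarrow> (derived G ^^ k) H \<subseteq> H"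
proof (induct k)
  case (Suc k)
  then show ?case
    using derived_incl[OF subset_refl exp_of_derived_is_subgroup[OF Suc.prems, of k]] by auto
qed simp

lemma solvable_derived_induct:
  assumes "solvable G" "H \<subseteq> carrier G" "\<one> \<in> S"
    and descend: "\<And>k. derived G ((derived G ^^ k) H) \<subseteq> S \<Longrightarrow> (derived G ^^ k) H \<subseteq> S"
  shows "H \<subseteq> S"
proof -
  obtain n where n: "(derived G ^^ n) (carrier G) = {\<one>}"
    using assms(1) solvable_iff_trivial_derived_seq by blast
  have top: "(derived G ^^ n) H \<subseteq> S"
    using mono_exp_of_derived[OF assms(2), of n] n assms(3) by auto
  have "(derived G ^^ k) H \<subseteq> S" if "k \<le> n" for k
    using that
  proof (induction k rule: inc_induct)
    case (step k)
    then show ?case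
      using descend[of k] by simp
  qed (rule top)
  then show ?thesis
    by (metis funpow_0 le0)
qed

lemma commute_of_commutator_commute:
  fixes p :: nat and u c :: 'a
  defines "t \<equiv> u \<otimes> c \<otimes> inv (c \<otimes> u)"
  assumes u: "u \<in> carrier G" and c: "c \<in> carrier G" "c [^] p = \<one>"
    and t: "t \<otimes> c = c \<otimes> t" "coprime (ord t) p"
  shows "u \<otimes> c = c \<otimes> u"
proof -
  have tc: "t \<in> carrier G"
    using u c by (simp add: t_def)
  have uc_eq: "u \<otimes> c = t \<otimes> (c \<otimes> u)"
    using u c by (simp add: t_def m_assoc)
  have pow: "u \<otimes> c [^] n = t [^] n \<otimes> c [^] n \<otimes> u" for n :: nat
  proof (induction n)
    case (Suc n)
    have "u \<otimes> c [^] Suc n = (t [^] n \<otimes> c [^] n) \<otimes> (u \<otimes> c)"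
      using Suc u c tc by (simp add: m_assoc[symmetric])
    also have "\<dots> = t [^] n \<otimes> (c [^] n \<otimes> t) \<otimes> (c \<otimes> u)"
      using u c tc by (simp add: uc_eq m_assoc)
    also have "\<dots> = t [^] Suc n \<otimes> c [^] Suc n \<otimes> u"
      using u c tc group_commutes_pow[OF t(1)[symmetric] c(1) tc, of n]
      by (simp add: m_assoc nat_pow_Suc2)
    finally show ?case .
  qed (simp add: u)
  have "t [^] p \<otimes> u = \<one> \<otimes> u"
    using pow[of p] u c tc by simp
  then have "t [^] (p ^ 1) = \<one>"
    using u tc by (simp add: r_cancel)
  then have "t = \<one>"
    using eq_one_of_prime_power_pow[OF tc t(2)] by blast
  then show ?thesis
    using uc_eq u c by simp
qed

end

lemma (in normal) rcos_group_hom: "group_hom G (G Mod H) (\<lambda>x. H #> x)"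
  by (intro group_hom.intro group_hom_axioms.intro is_group factorgroup_is_group r_coset_hom_Mod)

lemma (in normal) rcos_surj: "(\<lambda>x. H #> x) ` carrier G = carrier (G Mod H)"
  by (auto simp: FactGroup_def RCOSETS_def)

lemma (in normal) rcos_mult_commute:
  assumes "x \<in> carrier G" "y \<in> carrier G" "x \<otimes> y \<otimes> inv x \<otimes> inv y \<in> H"
  shows "(H #> x) <#> (H #> y) = (H #> y) <#> (H #> x)"
proof -
  have "(x \<otimes> y) \<otimes> inv (y \<otimes> x) = x \<otimes> y \<otimes> inv x \<otimes> inv y"
    using assms(1,2) by (simp add: inv_mult_group m_assoc)
  then have "H #> (x \<otimes> y) = H #> (y \<otimes> x)"
    using assms rcos_eq_iff[OF subgroup_axioms] by simp
  then show ?thesis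
    using assms(1,2) by (simp add: rcos_sum)
qed

lemma (in group_hom) ord_hom_dvd:
  assumes "x \<in> carrier G"
  shows "group.ord H (h x) dvd group.ord G x"
proof -
  have "h x [^]\<^bsub>H\<^esub> group.ord G x = h (x [^] group.ord G x)"
    using hom_nat_pow[OF assms] by simp
  also have "\<dots> = \<one>\<^bsub>H\<^esub>"
    using assms by simp
  finally show ?thesis
    using H.pow_eq_id assms by simp
qed

section \<open>Normal subgroups of order prime to p\<close>

context group
begin

lemma ord_dvd_card_subgroup:
  assumes H: "subgroup H G" and x: "x \<in> H"
  shows "ord x dvd card H"
proof -
  have xc: "x \<in> carrier G"
    using subgroup.mem_carrier[OF H x] .
  have "subgroup (generate G {x}) (G\<lparr>carrier := H\<rparr>)"
    using H x xc by (intro subgroup_incl generate_is_subgroup generate_subgroup_incl) auto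
  then have "card (generate G {x}) dvd order (G\<lparr>carrier := H\<rparr>)"
    using group.lagrange[OF subgroup.subgroup_is_group[OF H is_group]] by (metis dvd_triv_right)
  then show ?thesis
    using generate_pow_card[OF xc] by (simp add: order_def)
qed

lemma exists_ord_eq_prime:
  assumes fin: "finite (carrier G)" and H: "subgroup H G"
    and q: "Factorial_Ring.prime q" "q dvd card H"
  shows "\<exists>x\<in>H. ord x = q"
proof -
  have order: "order (G\<lparr>carrier := H\<rparr>) = q ^ 1 * (card H div q)"
    using q(2) by (simp add: order_def)
  obtain K where K: "subgroup K (G\<lparr>carrier := H\<rparr>)" "card K = q ^ 1"
    using sylow_thm[OF q(1) subgroup.subgroup_is_group[OF H is_group] order]
      finite_subset[OF subgroup.subset[OF H] fin] by auto
  have KG: "subgroup K G"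
    using incl_subgroup[OF H K(1)] .
  have "K \<noteq> {\<one>}"
    using K(2) prime_gt_1_nat[OF q(1)] by auto
  then obtain x where x: "x \<in> K" "x \<noteq> \<one>"
    using subgroup.one_closed[OF KG] by blast
  have "ord x dvd q"
    using ord_dvd_card_subgroup[OF KG x(1)] K(2) by simp
  moreover have "ord x \<noteq> 1"
    using ord_eq_1 subgroup.mem_carrier[OF KG x(1)] x(2) by simp
  ultimately have "ord x = q"
    using q(1) prime_nat_iff by blast
  moreover have "x \<in> H"
    using x(1) subgroup.subset[OF K(1)] by auto
  ultimately show ?thesis
    by blast
qed

lemma coprime_ord_iff_not_dvd_card:
  assumes fin: "finite (carrier G)" and H: "subgroup H G" and p: "Factorial_Ring.prime p"
  shows "(\<forall>x\<in>H. coprime (ord x) p) \<longleftrightarrow> \<not> p dvd card H"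
proof
  assume coprime: "\<forall>x\<in>H. coprime (ord x) p"
  show "\<not> p dvd card H"
  proof
    assume "p dvd card H"
    then obtain x where "x \<in> H" "ord x = p"
      using exists_ord_eq_prime[OF fin H p] by blast
    then have "coprime p p"
      using coprime by force
    then show False
      using prime_gt_1_nat[OF p] by simp
  qed
next
  assume "\<not> p dvd card H"
  then show "\<forall>x\<in>H. coprime (ord x) p"
    using ord_dvd_card_subgroup[OF H] p
    by (metis coprime_commute dvd_trans prime_imp_coprime)
qed

lemma card_eq_prime_power:
  assumes fin: "finite (carrier G)" and P: "subgroup P G" and p: "Factorial_Ring.prime p"
    and p_torsion: "\<forall>s\<in>P. \<exists>e. s [^] (p ^ e) = \<one>"
  shows "\<exists>k. card P = p ^ k"
proof (rule eq_prime_power_of_prime_divisors[OF _ p])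
  show "0 < card P"
    using subgroup.one_closed[OF P] finite_subset[OF subgroup.subset[OF P] fin]
    by (auto simp: card_gt_0_iff)
next
  fix q assume q: "Factorial_Ring.prime q" "q dvd card P"
  then obtain s where s: "s \<in> P" "ord s = q"
    using exists_ord_eq_prime[OF fin P] by blast
  obtain e where "s [^] (p ^ e) = \<one>"
    using p_torsion s(1) by blast
  then have "q dvd p ^ e"
    using pow_eq_id subgroup.mem_carrier[OF P s(1)] s(2) by simp
  then show "q = p"
    using q(1) p by (metis prime_dvd_power primes_dvd_imp_eq)
qed

lemma commute_p_power_torsion:
  assumes L: "subgroup L G" and Q: "subgroup Q G" "\<forall>q\<in>Q. coprime (ord q) p"
    and L_centralizes: "L \<subseteq> centralizer G Q" and derived_L: "derived G L \<subseteq> Q"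
    and s: "s \<in> L" "s [^] (p ^ e) = \<one>" and l: "l \<in> L"
  shows "s \<otimes> l = l \<otimes> s"
proof -
  have sc: "s \<in> carrier G" and lc: "l \<in> carrier G"
    using subgroup.mem_carrier[OF L] s l by auto
  define z where "z = inv s \<otimes> inv l \<otimes> s \<otimes> l"
  have "inv s \<otimes> inv l \<otimes> inv (inv s) \<otimes> inv (inv l) \<in> derived G L"
    using subgroup.m_inv_closed[OF L] s l by (intro commutator_in_derived) auto
  then have zQ: "z \<in> Q"
    using derived_L sc lc by (auto simp: z_def)
  have zc: "z \<in> carrier G"
    using subgroup.mem_carrier[OF Q(1) zQ] .
  have sz: "s \<otimes> z = z \<otimes> s"
    using centralizerD[OF subsetD[OF L_centralizes s(1)] zQ] .
  have "s \<otimes> z = inv l \<otimes> s \<otimes> l"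
    using sc lc by (simp add: z_def m_assoc)
  then have "inv l \<otimes> s [^] (p ^ e) \<otimes> l = (s \<otimes> z) [^] (p ^ e)"
    using conj_nat_pow[OF lc sc] by simp
  also have "\<dots> = z [^] (p ^ e)"
    using pow_mult_distrib[OF sz sc zc] s(2) zc by simp
  finally have "z [^] (p ^ e) = \<one>"
    using s(2) lc by simp
  then have "z = \<one>"
    using eq_one_of_prime_power_pow zc Q(2) zQ by blast
  then show ?thesis
    using commute_of_commutator_eq_one[OF sc lc] by (simp add: z_def)
qed

lemma normal_p_power_torsion:
  fixes p :: nat
  assumes L: "L \<lhd> G"
    and comm: "\<And>s l e. s \<in> L \<Longrightarrow> s [^] (p ^ e) = \<one> \<Longrightarrow> l \<in> L \<Longrightarrow> s \<otimes> l = l \<otimes> s"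
  shows "{s \<in> L. \<exists>e. s [^] (p ^ e) = \<one>} \<lhd> G"
proof -
  have L_sub: "subgroup L G"
    using L by (rule normal_imp_subgroup)
  have L_carrier: "x \<in> carrier G" if "x \<in> L" for x
    using subgroup.mem_carrier[OF L_sub that] .
  show ?thesis
  proof (rule normal_invI)
    show "subgroup {s \<in> L. \<exists>e. s [^] (p ^ e) = \<one>} G"
    proof (rule subgroupI)
      fix s assume "s \<in> {s \<in> L. \<exists>e. s [^] (p ^ e) = \<one>}"
      then obtain e where "s \<in> L" "s [^] (p ^ e) = \<one>"
        by blast
      then show "inv s \<in> {s \<in> L. \<exists>e. s [^] (p ^ e) = \<one>}"
        using subgroup.m_inv_closed[OF L_sub] nat_pow_inv L_carrier by auto
    next
      fix s t assume "s \<in> {s \<in> L. \<exists>e. s [^] (p ^ e) = \<one>}" "t \<in> {s \<in> L. \<exists>e. s [^] (p ^ e) = \<one>}"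
      then obtain e f where s: "s \<in> L" "s [^] (p ^ e) = \<one>" and t: "t \<in> L" "t [^] (p ^ f) = \<one>"
        by blast
      have "s [^] (p ^ (e + f)) = \<one>" "t [^] (p ^ (e + f)) = \<one>"
        using s t L_carrier pow_prime_power_eq_one_mono by simp_all
      then have "(s \<otimes> t) [^] (p ^ (e + f)) = \<one>"
        using pow_mult_distrib[OF comm[OF s t(1)]] L_carrier s t by simp
      then show "s \<otimes> t \<in> {s \<in> L. \<exists>e. s [^] (p ^ e) = \<one>}"
        using subgroup.m_closed[OF L_sub s(1) t(1)] by blast
    qed (use L_carrier subgroup.one_closed[OF L_sub] in auto)
  next
    fix x s assume x: "x \<in> carrier G" and "s \<in> {s \<in> L. \<exists>e. s [^] (p ^ e) = \<one>}"
    then obtain e where s: "s \<in> L" "s [^] (p ^ e) = \<one>"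
      by blast
    have "(x \<otimes> s \<otimes> inv x) [^] (p ^ e) = \<one>"
      using conj_nat_pow[OF inv_closed[OF x] L_carrier[OF s(1)], of "p ^ e"] x s(2) by simp
    then show "x \<otimes> s \<otimes> inv x \<in> {s \<in> L. \<exists>e. s [^] (p ^ e) = \<one>}"
      using normal.inv_op_closed2[OF L x s(1)] by blast
  qed
qed

lemma coprime_ord_of_trivial_p_power_torsion:
  assumes fin: "finite (carrier G)" and L: "subgroup L G" and p: "Factorial_Ring.prime p"
    and trivial: "{s \<in> L. \<exists>e. s [^] (p ^ e) = \<one>} = {\<one>}" and x: "x \<in> L"
  shows "coprime (ord x) p"
proof (rule ccontr)
  assume "\<not> coprime (ord x) p"
  then obtain m where m: "ord x = p * m"
    using p by (metis coprime_commute dvdE prime_imp_coprime)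
  have xc: "x \<in> carrier G"
    using subgroup.mem_carrier[OF L x] .
  have "m \<noteq> 0"
    using m ord_ge_1[OF fin xc] by auto
  then have "ord (x [^] m) = p"
    using ord_pow[OF xc] m by simp
  then have "x [^] m \<in> {s \<in> L. \<exists>e. s [^] (p ^ e) = \<one>}"
    using subgroup_nat_pow_closed[OF L x] pow_ord_eq_1[of "x [^] m"] xc
    by (metis (mono_tags, lifting) mem_Collect_eq nat_pow_closed power_one_right)
  then have "ord (x [^] m) = 1"
    using trivial by simp
  then show False
    using \<open>ord (x [^] m) = p\<close> p by simp
qed

lemma coprime_ord_of_derived_in_centralized:
  assumes fin: "finite (carrier G)" and p: "Factorial_Ring.prime p" and Op: "Op_trivial p G"
    and L: "L \<lhd> G" and Q: "subgroup Q G" "\<forall>q\<in>Q. coprime (ord q) p"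
    and L_centralizes: "L \<subseteq> centralizer G Q" and derived_L: "derived G L \<subseteq> Q"
    and x: "x \<in> L"
  shows "coprime (ord x) p"
proof -
  let ?T = "{s \<in> L. \<exists>e. s [^] (p ^ e) = \<one>}"
  have "?T \<lhd> G"
    using commute_p_power_torsion[OF normal_imp_subgroup[OF L] Q L_centralizes derived_L]
    by (intro normal_p_power_torsion[OF L]) blast
  moreover have "\<exists>k. card ?T = p ^ k"
    using card_eq_prime_power[OF fin normal_imp_subgroup[OF calculation] p] by blast
  ultimately have "p_subgroup p ?T G \<and> ?T \<lhd> G"
    by (simp add: p_subgroup_def normal_imp_subgroup)
  then have "?T = {\<one>}"
    using Op[unfolded Op_trivial_def, rule_format] by blast
  then show ?thesis
    by (rule coprime_ord_of_trivial_p_power_torsion[OF fin normal_imp_subgroup[OF L] p _ x])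
qed

lemma coprime_ord_set_mult:
  assumes L: "subgroup L G" "\<forall>x\<in>L. coprime (ord x) p"
    and Q: "subgroup Q G" "\<forall>x\<in>Q. coprime (ord x) p"
    and L_centralizes: "L \<subseteq> centralizer G Q"
    and y: "y \<in> L <#> Q"
  shows "coprime (ord y) p"
proof -
  obtain l q where lq: "l \<in> L" "q \<in> Q" "y = l \<otimes> q"
    using y by (auto simp: set_mult_def)
  have "ord (l \<otimes> q) dvd ord l * ord q"
    using ord_mul_divides[OF centralizerD[OF subsetD[OF L_centralizes lq(1)] lq(2)]]
      subgroup.mem_carrier[OF L(1) lq(1)] subgroup.mem_carrier[OF Q(1) lq(2)] by simp
  moreover have "coprime (ord l * ord q) p"
    using L(2) Q(2) lq by simp
  ultimately show ?thesis
    using lq(3) coprime_imp_coprime dvd_trans by blast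
qed

text \<open>This is the Hall-Higman lemma for soluble groups with \<open>O\<^sub>p(G) = 1\<close>. The first term \<open>L\<close> of
  the derived series of \<open>C\<^sub>G(Q)\<close> not contained in \<open>Q\<close> has \<open>L' \<subseteq> Q\<close>, so its \<open>p\<close>-elements
  form a normal \<open>p\<close>-subgroup, which must be trivial; then \<open>L Q\<close> is a normal \<open>p'\<close>-subgroup,
  so \<open>L \<subseteq> Q\<close> by maximality.\<close>

theorem centralizer_subset_max_coprime_normal:
  assumes fin: "finite (carrier G)" and sol: "solvable G"
    and p: "Factorial_Ring.prime p" and Op: "Op_trivial p G"
    and Q: "Q \<lhd> G" "\<not> p dvd card Q"
    and max: "\<And>N. N \<lhd> G \<Longrightarrow> \<not> p dvd card N \<Longrightarrow> card N \<le> card Q"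
  shows "centralizer G Q \<subseteq> Q"
proof (rule solvable_derived_induct[OF sol])
  show "centralizer G Q \<subseteq> carrier G" "\<one> \<in> Q"
    using subgroup.one_closed[OF normal_imp_subgroup[OF Q(1)]] by (auto simp: centralizer_def)
next
  fix k
  define L where "L = (derived G ^^ k) (centralizer G Q)"
  assume "derived G ((derived G ^^ k) (centralizer G Q)) \<subseteq> Q"
  then have derived_L: "derived G L \<subseteq> Q"
    by (simp add: L_def)
  have Q_sub: "subgroup Q G"
    using Q(1) by (rule normal_imp_subgroup)
  have Q_coprime: "\<forall>x\<in>Q. coprime (ord x) p"
    using coprime_ord_iff_not_dvd_card[OF fin Q_sub p] Q(2) by blast
  have L: "L \<lhd> G"
    unfolding L_def using normal_centralizer[OF Q(1)] by (rule normal_exp_of_derived)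
  have L_centralizes: "L \<subseteq> centralizer G Q"
    unfolding L_def using normal_imp_subgroup[OF normal_centralizer[OF Q(1)]]
    by (rule exp_of_derived_subset)
  have L_coprime: "\<forall>x\<in>L. coprime (ord x) p"
    using coprime_ord_of_derived_in_centralized[OF fin p Op L Q_sub Q_coprime L_centralizes derived_L]
    by blast
  have LQ: "L <#> Q \<lhd> G"
    using normal_subgroup_set_mult_closed[OF L Q(1)] .
  have "\<forall>y\<in>L <#> Q. coprime (ord y) p"
    using coprime_ord_set_mult[OF normal_imp_subgroup[OF L] L_coprime Q_sub Q_coprime L_centralizes]
    by blast
  then have "card (L <#> Q) \<le> card Q"
    using max[OF LQ] coprime_ord_iff_not_dvd_card[OF fin normal_imp_subgroup[OF LQ] p] by blast
  moreover have "Q \<subseteq> L <#> Q" "L \<subseteq> L <#> Q"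
    using subgroup.one_closed[OF normal_imp_subgroup[OF L]] subgroup.one_closed[OF Q_sub]
      subgroup.mem_carrier[OF normal_imp_subgroup[OF L]] subgroup.mem_carrier[OF Q_sub]
    by (auto simp: set_mult_def intro!: bexI[of _ \<one>] exI)
  moreover have "finite (L <#> Q)"
    using finite_subset[OF subgroup.subset[OF normal_imp_subgroup[OF LQ]] fin] .
  ultimately show "(derived G ^^ k) (centralizer G Q) \<subseteq> Q"
    unfolding L_def[symmetric] using card_seteq by blast
qed

lemma exists_max_coprime_normal:
  assumes fin: "finite (carrier G)" and p: "Factorial_Ring.prime p"
  shows "\<exists>Q. Q \<lhd> G \<and> \<not> p dvd card Q \<and> (\<forall>N. N \<lhd> G \<and> \<not> p dvd card N \<longrightarrow> card N \<le> card Q)"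
proof -
  have "{\<one>} \<lhd> G \<and> \<not> p dvd card {\<one>}"
    using one_is_normal prime_gt_1_nat[OF p] by simp
  moreover have "\<forall>N. N \<lhd> G \<and> \<not> p dvd card N \<longrightarrow> card N < Suc (card (carrier G))"
    using fin by (metis card_mono le_imp_less_Suc normal_imp_subgroup subgroup.subset)
  ultimately have "\<exists>Q. (Q \<lhd> G \<and> \<not> p dvd card Q) \<and> (\<forall>N. N \<lhd> G \<and> \<not> p dvd card N \<longrightarrow> card N \<le> card Q)"
    by (rule ex_has_greatest_nat)
  then show ?thesis
    by blast
qed

end

section \<open>Normal subsets whose squares consist of p-elements\<close>

locale normal_p_square_set = group G for G (structure) +
  fixes p :: nat and A :: "'a set"
  assumes prime_p: "Factorial_Ring.prime p"
    and A_subset: "A \<subseteq> carrier G"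
    and A_conj_closed: "g \<in> carrier G \<Longrightarrow> x \<in> A \<Longrightarrow> g \<otimes> x \<otimes> inv g \<in> A"
    and A_square_p_power: "x \<in> A \<Longrightarrow> y \<in> A \<Longrightarrow> \<exists>k. (x \<otimes> y) [^] (p ^ k) = \<one>"
begin

lemma commute_factor_of_commute_product:
  assumes V: "V \<lhd> G" and V_coprime: "\<forall>v\<in>V. coprime (ord v) p"
    and x: "x \<in> A" and g: "g \<in> A" and xg: "x \<otimes> g = g \<otimes> x"
    and u: "u \<in> V" and u_xg: "u \<otimes> (x \<otimes> g) = (x \<otimes> g) \<otimes> u"
  shows "u \<otimes> g = g \<otimes> u"
proof -
  have V_sub: "subgroup V G"
    using V by (rule normal_imp_subgroup)
  have xc: "x \<in> carrier G" and gc: "g \<in> carrier G" and uc: "u \<in> carrier G"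
    using x g A_subset subgroup.mem_carrier[OF V_sub u] by auto
  define h where "h = x \<otimes> g"
  define w where "w = inv g \<otimes> inv u \<otimes> g \<otimes> u"
  have hc: "h \<in> carrier G"
    using xc gc by (simp add: h_def)
  have "inv g \<otimes> inv u \<otimes> g \<in> V"
    using normal.inv_op_closed1[OF V gc subgroup.m_inv_closed[OF V_sub u]] .
  then have wV: "w \<in> V"
    unfolding w_def using subgroup.m_closed[OF V_sub _ u] by blast
  have C: "subgroup (centralizer G {h}) G"
    using hc by (simp add: subgroup_centralizer)
  have "g \<in> centralizer G {h}" "u \<in> centralizer G {h}"
    using xc gc uc u_xg xg by (simp_all add: centralizer_singleton_iff h_def m_assoc)
  then have "w \<in> centralizer G {h}"
    unfolding w_def by (intro subgroup.m_closed[OF C] subgroup.m_inv_closed[OF C])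
  then have hw: "h \<otimes> w = w \<otimes> h"
    by (simp add: centralizer_singleton_iff)
  have "x \<otimes> (inv u \<otimes> g \<otimes> u) = h \<otimes> w"
    using xc gc uc by (simp add: h_def w_def m_assoc)
  moreover have "inv u \<otimes> g \<otimes> u \<in> A"
    using A_conj_closed[of "inv u" g] uc g by simp
  ultimately obtain l where "(h \<otimes> w) [^] (p ^ l) = \<one>"
    using A_square_p_power[OF x] by metis
  moreover obtain k where "h [^] (p ^ k) = \<one>"
    using A_square_p_power[OF x g] by (auto simp: h_def)
  ultimately have "w = \<one>"
    using eq_one_of_commuting_prime_power_pow[OF hc _ hw] V_coprime wV subgroup.mem_carrier[OF V_sub wV]
    by blast
  then show ?thesis
    using commute_of_commutator_eq_one[OF gc uc] by (simp add: w_def)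
qed

lemma image_normal_p_square_set:
  assumes "group_hom G H h" and surj: "h ` carrier G = carrier H"
  shows "normal_p_square_set H p (h ` A)"
proof -
  interpret h: group_hom G H h by fact
  have A_carrier: "x \<in> carrier G" if "x \<in> A" for x
    using subsetD[OF A_subset that] .
  have A_conj: "g \<otimes>\<^bsub>H\<^esub> y \<otimes>\<^bsub>H\<^esub> inv\<^bsub>H\<^esub> g \<in> h ` A" if g: "g \<in> carrier H" and y: "y \<in> h ` A" for g y
  proof -
    have "g \<in> h ` carrier G"
      using g surj by simp
    then obtain g' where g': "g' \<in> carrier G" "g = h g'"
      by (rule imageE) simp
    obtain x where x: "x \<in> A" "y = h x"
      using y by (rule imageE) simp
    have "g \<otimes>\<^bsub>H\<^esub> y \<otimes>\<^bsub>H\<^esub> inv\<^bsub>H\<^esub> g = h (g' \<otimes> x \<otimes> inv g')"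
      using g' x A_carrier[OF x(1)] by simp
    moreover have "g' \<otimes> x \<otimes> inv g' \<in> A"
      using A_conj_closed[OF g'(1) x(1)] .
    ultimately show ?thesis
      by simp
  qed
  have A_square: "\<exists>k. (x \<otimes>\<^bsub>H\<^esub> y) [^]\<^bsub>H\<^esub> (p ^ k) = \<one>\<^bsub>H\<^esub>" if x: "x \<in> h ` A" and y: "y \<in> h ` A" for x y
  proof -
    obtain x' y' where x'y': "x' \<in> A" "y' \<in> A" "x = h x'" "y = h y'"
      using x y by (auto elim!: imageE)
    obtain k where k: "(x' \<otimes> y') [^] (p ^ k) = \<one>"
      using A_square_p_power[OF x'y'(1,2)] ..
    have "(x \<otimes>\<^bsub>H\<^esub> y) [^]\<^bsub>H\<^esub> (p ^ k) = h ((x' \<otimes> y') [^] (p ^ k))"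
      using x'y' A_carrier[OF x'y'(1)] A_carrier[OF x'y'(2)] by (simp add: h.hom_nat_pow)
    then have "(x \<otimes>\<^bsub>H\<^esub> y) [^]\<^bsub>H\<^esub> (p ^ k) = \<one>\<^bsub>H\<^esub>"
      by (simp add: k)
    then show ?thesis ..
  qed
  show ?thesis
    using prime_p A_carrier A_conj A_square
    by (intro normal_p_square_set.intro normal_p_square_set_axioms.intro h.H.is_group) auto
qed

end

locale p_square_coset = normal_p_square_set +
  fixes a c
  assumes a_carrier: "a \<in> carrier G" and c_carrier: "c \<in> carrier G"
    and a_c_commute: "a \<otimes> c = c \<otimes> a"
    and a_pow_p: "a [^] p = \<one>" and c_pow_p: "c [^] p = \<one>"
    and coset_subset: "a \<otimes> c [^] (m::nat) \<in> A"
begin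

lemma coset_mult: "(a \<otimes> c [^] (i::nat)) \<otimes> (a \<otimes> c [^] (j::nat)) = a [^] (2::nat) \<otimes> c [^] (i + j)"
proof -
  have "c [^] i \<otimes> a = a \<otimes> c [^] i"
    using group_commutes_pow[OF a_c_commute[symmetric] c_carrier a_carrier] by simp
  have "(a \<otimes> c [^] i) \<otimes> (a \<otimes> c [^] j) = a \<otimes> (c [^] i \<otimes> a) \<otimes> c [^] j"
    using a_carrier c_carrier by (simp add: m_assoc)
  also have "\<dots> = a [^] (2::nat) \<otimes> c [^] (i + j)"
    using a_carrier c_carrier
    by (simp add: \<open>c [^] i \<otimes> a = a \<otimes> c [^] i\<close> m_assoc nat_pow_mult numeral_2_eq_2)
  finally show ?thesis .
qed

lemma commute_c_of_commute_coset:
  assumes V: "V \<lhd> G" and V_coprime: "\<forall>v\<in>V. coprime (ord v) p"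
    and u: "u \<in> V" and u_m: "u \<otimes> (a \<otimes> c [^] (m::nat)) = (a \<otimes> c [^] m) \<otimes> u"
  shows "u \<otimes> c = c \<otimes> u"
proof -
  have uc: "u \<in> carrier G"
    using subgroup.mem_carrier[OF normal_imp_subgroup[OF V] u] .
  have C: "subgroup (centralizer G {u}) G"
    using uc by (simp add: subgroup_centralizer)
  have in_C: "a \<otimes> c [^] j \<in> centralizer G {u}" for j :: nat
  proof -
    \<comment> \<open>\<open>i + j = 2 m\<close> modulo \<open>p\<close>, so that \<open>a c\<^sup>i \<otimes> a c\<^sup>j = (a c\<^sup>m)\<^sup>2\<close>\<close>
    define i where "i = 2 * m + (p - 1) * j"
    obtain q where "p = Suc q"
      using prime_gt_0_nat[OF prime_p] gr0_implies_Suc by blast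
    then have "i + j = (m + m) + p * j"
      by (simp add: i_def)
    moreover have "c [^] (m + m + p * j) = c [^] (m + m) \<otimes> (c [^] p) [^] j"
      using c_carrier by (simp add: nat_pow_mult nat_pow_pow)
    ultimately have "c [^] (i + j) = c [^] (m + m)"
      using c_carrier c_pow_p by simp
    then have square: "(a \<otimes> c [^] i) \<otimes> (a \<otimes> c [^] j) = (a \<otimes> c [^] m) \<otimes> (a \<otimes> c [^] m)"
      by (simp add: coset_mult)
    have "a \<otimes> c [^] m \<in> centralizer G {u}"
      using u_m uc a_carrier c_carrier by (simp add: centralizer_singleton_iff)
    then have "(a \<otimes> c [^] i) \<otimes> (a \<otimes> c [^] j) \<in> centralizer G {u}"
      unfolding square using subgroup.m_closed[OF C] by blast
    moreover have "(a \<otimes> c [^] i) \<otimes> (a \<otimes> c [^] j) = (a \<otimes> c [^] j) \<otimes> (a \<otimes> c [^] i)"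
      by (simp add: coset_mult add.commute)
    ultimately have "u \<otimes> (a \<otimes> c [^] j) = (a \<otimes> c [^] j) \<otimes> u"
      using commute_factor_of_commute_product[OF V V_coprime coset_subset coset_subset _ u] uc
      by (simp add: centralizer_singleton_iff)
    then show ?thesis
      using uc a_carrier c_carrier by (simp add: centralizer_singleton_iff)
  qed
  have "inv (a \<otimes> c [^] m) \<otimes> (a \<otimes> c [^] Suc m) \<in> centralizer G {u}"
    by (intro subgroup.m_closed[OF C] subgroup.m_inv_closed[OF C] in_C)
  moreover have "inv (a \<otimes> c [^] m) \<otimes> (a \<otimes> c [^] Suc m) = inv (a \<otimes> c [^] m) \<otimes> ((a \<otimes> c [^] m) \<otimes> c)"
    using a_carrier c_carrier by (simp add: m_assoc)
  then have "inv (a \<otimes> c [^] m) \<otimes> (a \<otimes> c [^] Suc m) = c"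
    using a_carrier c_carrier by simp
  ultimately show ?thesis
    by (simp add: centralizer_singleton_iff)
qed

lemma image_p_square_coset:
  assumes hom: "group_hom G H h" and surj: "h ` carrier G = carrier H"
  shows "p_square_coset H p (h ` A) (h a) (h c)"
proof (intro p_square_coset.intro p_square_coset_axioms.intro)
  interpret h: group_hom G H h
    by (rule hom)
  show "normal_p_square_set H p (h ` A)"
    by (rule image_normal_p_square_set[OF hom surj])
  show "h a \<in> carrier H" "h c \<in> carrier H"
    using a_carrier c_carrier by simp_all
  show "h a \<otimes>\<^bsub>H\<^esub> h c = h c \<otimes>\<^bsub>H\<^esub> h a"
    using a_carrier c_carrier a_c_commute by (simp flip: h.hom_mult)
  show "h a [^]\<^bsub>H\<^esub> p = \<one>\<^bsub>H\<^esub>" "h c [^]\<^bsub>H\<^esub> p = \<one>\<^bsub>H\<^esub>"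
    using a_carrier c_carrier a_pow_p c_pow_p by (simp_all flip: h.hom_nat_pow)
  fix m :: nat
  have "h a \<otimes>\<^bsub>H\<^esub> h c [^]\<^bsub>H\<^esub> m = h (a \<otimes> c [^] m)"
    using a_carrier c_carrier by (simp flip: h.hom_nat_pow)
  then show "h a \<otimes>\<^bsub>H\<^esub> h c [^]\<^bsub>H\<^esub> m \<in> h ` A"
    using coset_subset[of m] by simp
qed

end

section \<open>Orbit products in abelian normal subgroups\<close>

locale abelian_normal_subgroup = group G for G (structure) +
  fixes V :: "'a set"
  assumes V_normal: "V \<lhd> G"
    and V_commute: "u \<in> V \<Longrightarrow> v \<in> V \<Longrightarrow> u \<otimes> v = v \<otimes> u"
begin

lemma V_subgroup: "subgroup V G"
  using V_normal by (rule normal_imp_subgroup)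

lemma V_carrier: "v \<in> V \<Longrightarrow> v \<in> carrier G"
  using subgroup.mem_carrier[OF V_subgroup] .

sublocale V: comm_group "G\<lparr>carrier := V\<rparr>"
  by (rule group.group_comm_groupI[OF subgroup.subgroup_is_group[OF V_subgroup is_group]])
    (simp add: V_commute)

lemma finprod_V_closed: "(\<And>i. i \<in> S \<Longrightarrow> f i \<in> V) \<Longrightarrow> finprod (G\<lparr>carrier := V\<rparr>) f S \<in> V"
  using V.finprod_closed[of f S] by (simp add: Pi_def)

lemma conj_closed: "y \<in> carrier G \<Longrightarrow> w \<in> V \<Longrightarrow> inv y \<otimes> w \<otimes> y \<in> V"
  using normal.inv_op_closed1[OF V_normal] .

lemma conj_finprod:
  assumes "y \<in> carrier G" "f \<in> S \<rightarrow> V"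
  shows "inv y \<otimes> finprod (G\<lparr>carrier := V\<rparr>) f S \<otimes> y
    = finprod (G\<lparr>carrier := V\<rparr>) (\<lambda>k. inv y \<otimes> f k \<otimes> y) S"
  using assms V_carrier conj_closed
  by (intro V.finprod_endomorphism) (auto simp: m_assoc)

lemma finprod_V_permute:
  assumes "bij_betw \<sigma> S S" "\<And>i. i \<in> S \<Longrightarrow> f i \<in> V"
  shows "finprod (G\<lparr>carrier := V\<rparr>) (\<lambda>i. f (\<sigma> i)) S = finprod (G\<lparr>carrier := V\<rparr>) f S"
  using V.finprod_reindex[of f \<sigma> S] assms by (simp add: bij_betw_def Pi_def)

definition conj_norm :: "nat \<Rightarrow> 'a \<Rightarrow> 'a \<Rightarrow> 'a" where
  "conj_norm n y w = (\<Otimes>\<^bsub>G\<lparr>carrier := V\<rparr>\<^esub>k\<in>{..<n}. inv (y [^] k) \<otimes> w \<otimes> y [^] k)"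

lemma conj_norm_closed: "y \<in> carrier G \<Longrightarrow> w \<in> V \<Longrightarrow> conj_norm n y w \<in> V"
  unfolding conj_norm_def by (intro finprod_V_closed conj_closed) auto

lemma conj_norm_commute:
  assumes y: "y \<in> carrier G" "y [^] n = \<one>" "0 < n" and w: "w \<in> V"
  shows "conj_norm n y w \<otimes> y = y \<otimes> conj_norm n y w"
proof -
  define f where "f = (\<lambda>k::nat. inv (y [^] k) \<otimes> w \<otimes> y [^] k)"
  have f: "f \<in> S \<rightarrow> V" for S
    using y w conj_closed by (simp add: f_def)
  have shift: "inv y \<otimes> f k \<otimes> y = f (Suc k mod n)" for k
    using y V_carrier[OF w] by (simp add: f_def nat_pow_mod_eq[OF y(1,2)] m_assoc inv_mult_group)
  have norm_eq: "conj_norm n y w = finprod (G\<lparr>carrier := V\<rparr>) f {..<n}"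
    by (simp add: conj_norm_def f_def)
  then have "inv y \<otimes> conj_norm n y w \<otimes> y = finprod (G\<lparr>carrier := V\<rparr>) (\<lambda>k. f (Suc k mod n)) {..<n}"
    using conj_finprod[OF y(1) f] by (simp add: shift)
  also have "\<dots> = finprod (G\<lparr>carrier := V\<rparr>) f {..<n}"
    using bij_betw_Suc_mod[OF y(3)] f by (intro finprod_V_permute) auto
  finally have "inv y \<otimes> conj_norm n y w \<otimes> y = conj_norm n y w"
    by (simp add: norm_eq)
  then show ?thesis
    using y(1) V_carrier[OF conj_norm_closed[OF y(1) w]]
    by (metis m_assoc mult_inv_cancel_left m_closed inv_closed)
qed

lemma conj_norm_commuting_mult:
  assumes a: "a \<in> carrier G" and c: "c \<in> carrier G" and ac: "a \<otimes> c = c \<otimes> a"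
    and c_n: "c [^] n = \<one>" and w: "w \<in> V"
  shows "conj_norm n (a \<otimes> c [^] j) w
    = (\<Otimes>\<^bsub>G\<lparr>carrier := V\<rparr>\<^esub>k\<in>{..<n}. inv (c [^] (j * k mod n)) \<otimes> (inv (a [^] k) \<otimes> w \<otimes> a [^] k) \<otimes> c [^] (j * k mod n))"
  unfolding conj_norm_def
proof (rule V.finprod_cong')
  fix k assume "k \<in> {..<n}"
  have "a \<otimes> c [^] j = c [^] j \<otimes> a"
    using group_commutes_pow[OF ac[symmetric] c a] by simp
  then have "(a \<otimes> c [^] j) [^] k = a [^] k \<otimes> (c [^] j) [^] k"
    using pow_mult_distrib a c by simp
  also have "\<dots> = a [^] k \<otimes> c [^] (j * k mod n)"
    using c by (simp add: nat_pow_pow nat_pow_mod_eq[OF c c_n])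
  finally show "inv ((a \<otimes> c [^] j) [^] k) \<otimes> w \<otimes> (a \<otimes> c [^] j) [^] k
      = inv (c [^] (j * k mod n)) \<otimes> (inv (a [^] k) \<otimes> w \<otimes> a [^] k) \<otimes> c [^] (j * k mod n)"
    using a c V_carrier[OF w] by (simp add: inv_mult_group m_assoc)
qed (use a c w conj_closed in auto)

text \<open>Every \<open>a\<^sup>k c\<^sup>m\<close> with \<open>k \<noteq> 0\<close> is a power of exactly one \<open>a c\<^sup>j\<close>, while the
  identity occurs in each of the \<open>p\<close> orbit products; regrouping by \<open>k\<close> gives the identity below.\<close>

lemma prod_conj_norm_lines:
  assumes p: "Factorial_Ring.prime p" and a: "a \<in> carrier G" and c: "c \<in> carrier G"
    and ac: "a \<otimes> c = c \<otimes> a" and c_p: "c [^] p = \<one>" and w: "w \<in> V"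
  shows "(\<Otimes>\<^bsub>G\<lparr>carrier := V\<rparr>\<^esub>j\<in>{..<p}. conj_norm p (a \<otimes> c [^] j) w)
    = w [^] p \<otimes> (\<Otimes>\<^bsub>G\<lparr>carrier := V\<rparr>\<^esub>k\<in>{1..<p}. conj_norm p c (inv (a [^] k) \<otimes> w \<otimes> a [^] k))"
proof -
  define F where "F = (\<lambda>(k::nat) (m::nat). inv (c [^] m) \<otimes> (inv (a [^] k) \<otimes> w \<otimes> a [^] k) \<otimes> c [^] m)"
  have F_V: "F k m \<in> V" for k m
    unfolding F_def using a c w by (intro conj_closed) auto
  define Q where "Q = (\<lambda>k. \<Otimes>\<^bsub>G\<lparr>carrier := V\<rparr>\<^esub>j\<in>{..<p}. F k (j * k mod p))"
  have Q_V: "Q \<in> {..<p} \<rightarrow> V"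
    unfolding Q_def using F_V by (auto intro: finprod_V_closed)
  have "{..<p} = insert 0 {1..<p}"
    using prime_gt_0_nat[OF p] by auto
  then have split: "finprod (G\<lparr>carrier := V\<rparr>) Q {..<p} = Q 0 \<otimes> finprod (G\<lparr>carrier := V\<rparr>) Q {1..<p}"
    using Q_V by (simp add: Pi_def)
  have Q_0: "Q 0 = w [^] p"
    using V_carrier[OF w] V.finprod_const[of w "{..<p}"] w by (simp add: Q_def F_def flip: nat_pow_consistent)
  have Q_k: "Q k = conj_norm p c (inv (a [^] k) \<otimes> w \<otimes> a [^] k)" if "k \<in> {1..<p}" for k
  proof -
    have "\<not> p dvd k"
      using that by (auto dest: dvd_imp_le)
    then show ?thesis
      unfolding Q_def using bij_betw_mult_mod_prime[OF p] F_V
      by (subst finprod_V_permute) (auto simp: conj_norm_def F_def)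
  qed
  have "(\<Otimes>\<^bsub>G\<lparr>carrier := V\<rparr>\<^esub>j\<in>{..<p}. conj_norm p (a \<otimes> c [^] j) w)
      = (\<Otimes>\<^bsub>G\<lparr>carrier := V\<rparr>\<^esub>j\<in>{..<p}. \<Otimes>\<^bsub>G\<lparr>carrier := V\<rparr>\<^esub>k\<in>{..<p}. F k (j * k mod p))"
    by (simp add: conj_norm_commuting_mult[OF a c ac c_p w] F_def)
  also have "\<dots> = finprod (G\<lparr>carrier := V\<rparr>) Q {..<p}"
    unfolding Q_def using F_V by (intro V.finprod_swap) auto
  also have "\<dots> = w [^] p \<otimes> finprod (G\<lparr>carrier := V\<rparr>) Q {1..<p}"
    by (simp add: split Q_0)
  also have "finprod (G\<lparr>carrier := V\<rparr>) Q {1..<p}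
      = (\<Otimes>\<^bsub>G\<lparr>carrier := V\<rparr>\<^esub>k\<in>{1..<p}. conj_norm p c (inv (a [^] k) \<otimes> w \<otimes> a [^] k))"
    using Q_k a c w conj_closed conj_norm_closed by (intro V.finprod_cong') auto
  finally show ?thesis .
qed

lemma subset_centralizer_of_line_centralizers:
  assumes p: "Factorial_Ring.prime p" and a: "a \<in> carrier G" and c: "c \<in> carrier G"
    and ac: "a \<otimes> c = c \<otimes> a" and a_p: "a [^] p = \<one>" and c_p: "c [^] p = \<one>"
    and V_coprime: "\<forall>v\<in>V. coprime (ord v) p"
    and lines: "\<And>(j::nat) v. v \<in> V \<Longrightarrow> v \<otimes> (a \<otimes> c [^] j) = (a \<otimes> c [^] j) \<otimes> v \<Longrightarrow> v \<otimes> c = c \<otimes> v"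
  shows "V \<subseteq> centralizer G {c}"
proof
  fix w assume w: "w \<in> V"
  have p_pos: "0 < p"
    using prime_gt_0_nat[OF p] .
  define C where "C = V \<inter> centralizer G {c}"
  have C_subgroup: "subgroup C G"
    unfolding C_def using V_subgroup c by (simp add: subgroups_Inter_pair subgroup_centralizer)
  then have C_in_V: "subgroup C (G\<lparr>carrier := V\<rparr>)"
    using V_subgroup by (rule subgroup_incl) (simp add: C_def)
  have line_norm: "conj_norm p (a \<otimes> c [^] j) w \<in> C" for j :: nat
  proof -
    have N: "conj_norm p (a \<otimes> c [^] j) w \<in> V"
      using a c w conj_norm_closed by simp
    have "conj_norm p (a \<otimes> c [^] j) w \<otimes> (a \<otimes> c [^] j) = (a \<otimes> c [^] j) \<otimes> conj_norm p (a \<otimes> c [^] j) w"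
      using conj_norm_commute[OF _ commuting_mult_nat_pow_pow_eq_one[OF a c ac a_p c_p] p_pos w] a c
      by simp
    then have "conj_norm p (a \<otimes> c [^] j) w \<otimes> c = c \<otimes> conj_norm p (a \<otimes> c [^] j) w"
      by (rule lines[OF N])
    then show ?thesis
      using N V_carrier[OF N] by (simp add: C_def centralizer_singleton_iff)
  qed
  have c_norm: "conj_norm p c (inv (a [^] k) \<otimes> w \<otimes> a [^] k) \<in> C" for k :: nat
    using a c w c_p p_pos conj_closed conj_norm_closed conj_norm_commute V_carrier
    by (simp add: C_def centralizer_singleton_iff)
  define L where "L = (\<Otimes>\<^bsub>G\<lparr>carrier := V\<rparr>\<^esub>j\<in>{..<p}. conj_norm p (a \<otimes> c [^] j) w)"
  define P where "P = (\<Otimes>\<^bsub>G\<lparr>carrier := V\<rparr>\<^esub>k\<in>{1..<p}. conj_norm p c (inv (a [^] k) \<otimes> w \<otimes> a [^] k))"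
  have L: "L \<in> C" and P: "P \<in> C"
    unfolding L_def P_def using line_norm c_norm by (auto intro!: V.finprod_subgroup_closed[OF C_in_V])
  have "L = w [^] p \<otimes> P"
    unfolding L_def P_def using prod_conj_norm_lines[OF p a c ac c_p w] .
  then have "w [^] p = L \<otimes> inv P"
    using subgroup.mem_carrier[OF C_subgroup P] V_carrier[OF w] by (simp add: m_assoc)
  then have "w [^] p \<in> centralizer G {c}"
    using subgroup.m_closed[OF C_subgroup L subgroup.m_inv_closed[OF C_subgroup P]] by (simp add: C_def)
  moreover have "coprime p (ord w)"
    using V_coprime w by (simp add: coprime_commute)
  ultimately show "w \<in> centralizer G {c}"
    using mem_subgroup_of_coprime_pow subgroup_centralizer c V_carrier[OF w] by simp
qed

end

section \<open>Normal p'-subgroups are centralized by c\<close>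

context p_square_coset
begin

theorem abelian_normal_subset_centralizer:
  assumes V: "V \<lhd> G" and V_coprime: "\<forall>v\<in>V. coprime (ord v) p"
    and V_commute: "\<And>u v. u \<in> V \<Longrightarrow> v \<in> V \<Longrightarrow> u \<otimes> v = v \<otimes> u"
  shows "V \<subseteq> centralizer G {c}"
proof -
  interpret N: abelian_normal_subgroup G V
    using V V_commute by (intro abelian_normal_subgroup.intro abelian_normal_subgroup_axioms.intro is_group)
  show ?thesis
    using commute_c_of_commute_coset[OF V V_coprime] N.V_carrier
    by (intro N.subset_centralizer_of_line_centralizers[OF prime_p a_carrier c_carrier a_c_commute
          a_pow_p c_pow_p V_coprime]) blast
qed

text \<open>Modulo \<open>W = U'\<close> the image of \<open>U\<close> is abelian, so the abelian case applies in \<open>G Mod W\<close>.\<close>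

lemma commutator_with_c_in_derived:
  assumes U: "U \<lhd> G" and U_coprime: "\<forall>u\<in>U. coprime (ord u) p" and u: "u \<in> U"
  shows "u \<otimes> c \<otimes> inv (c \<otimes> u) \<in> derived G U"
proof -
  define W where "W = derived G U"
  interpret W: normal W G
    unfolding W_def using U by (rule derived_is_normal)
  define h where "h = (\<lambda>x. W #> x)"
  interpret h: group_hom G "G Mod W" h
    unfolding h_def by (rule W.rcos_group_hom)
  have U_carrier: "x \<in> carrier G" if "x \<in> U" for x
    using subgroup.mem_carrier[OF normal_imp_subgroup[OF U] that] .
  interpret Q: p_square_coset "G Mod W" p "h ` A" "h a" "h c"
    using image_p_square_coset[OF h.group_hom_axioms] W.rcos_surj by (simp add: h_def)
  have "h ` U \<lhd> G Mod W"
    using normal.surj_hom_normal_subgroup[OF U h.group_hom_axioms] W.rcos_surj by (simp add: h_def)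
  moreover have "\<forall>v\<in>h ` U. coprime (group.ord (G Mod W) v) p"
  proof
    fix v assume "v \<in> h ` U"
    then obtain x where x: "x \<in> U" "v = h x"
      by blast
    show "coprime (group.ord (G Mod W) v) p"
      unfolding x(2) using coprime_divisors[OF h.ord_hom_dvd[OF U_carrier[OF x(1)]] dvd_refl] U_coprime x(1)
      by blast
  qed
  moreover have "v \<otimes>\<^bsub>G Mod W\<^esub> v' = v' \<otimes>\<^bsub>G Mod W\<^esub> v" if v: "v \<in> h ` U" and v': "v' \<in> h ` U" for v v'
  proof -
    obtain x y where x: "x \<in> U" "v = h x" and y: "y \<in> U" "v' = h y"
      using v v' by blast
    have "x \<otimes> y \<otimes> inv x \<otimes> inv y \<in> W"
      unfolding W_def using commutator_in_derived[OF x(1) y(1)] .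
    then show ?thesis
      using W.rcos_mult_commute[OF U_carrier[OF x(1)] U_carrier[OF y(1)]] x(2) y(2) by (simp add: h_def)
  qed
  ultimately have "h ` U \<subseteq> centralizer (G Mod W) {h c}"
    by (rule Q.abelian_normal_subset_centralizer)
  then have "h u \<in> centralizer (G Mod W) {h c}"
    using u by blast
  then have "(W #> u) <#> (W #> c) = (W #> c) <#> (W #> u)"
    by (simp add: centralizer_singleton_iff h_def)
  then have "W #> (u \<otimes> c) = W #> (c \<otimes> u)"
    using U_carrier[OF u] c_carrier by (simp add: W.rcos_sum)
  then show ?thesis
    using u U_carrier c_carrier rcos_eq_iff[OF normal_imp_subgroup[OF W.normal_axioms]]
    by (simp add: W_def)
qed

theorem normal_coprime_subset_centralizer:
  assumes "solvable G" and V: "V \<lhd> G" and V_coprime: "\<forall>v\<in>V. coprime (ord v) p"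
  shows "V \<subseteq> centralizer G {c}"
proof (rule solvable_derived_induct[OF assms(1)])
  show "V \<subseteq> carrier G" "\<one> \<in> centralizer G {c}"
    using subgroup.subset[OF normal_imp_subgroup[OF V]] c_carrier by (simp_all add: centralizer_singleton_iff)
next
  fix k
  define U where "U = (derived G ^^ k) V"
  assume "derived G ((derived G ^^ k) V) \<subseteq> centralizer G {c}"
  then have derived_U: "derived G U \<subseteq> centralizer G {c}"
    by (simp add: U_def)
  have U: "U \<lhd> G"
    unfolding U_def using V by (rule normal_exp_of_derived)
  have UV: "U \<subseteq> V"
    unfolding U_def using normal_imp_subgroup[OF V] by (rule exp_of_derived_subset)
  have derived_U_U: "derived G U \<subseteq> U"
    using derived_incl[OF subset_refl normal_imp_subgroup[OF U]] .
  show "(derived G ^^ k) V \<subseteq> centralizer G {c}"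
    unfolding U_def[symmetric]
  proof
    fix u assume u: "u \<in> U"
    have t: "u \<otimes> c \<otimes> inv (c \<otimes> u) \<in> derived G U"
      using commutator_with_c_in_derived[OF U _ u] UV V_coprime by blast
    have "u \<in> carrier G"
      using subgroup.mem_carrier[OF normal_imp_subgroup[OF U] u] .
    moreover have "(u \<otimes> c \<otimes> inv (c \<otimes> u)) \<otimes> c = c \<otimes> (u \<otimes> c \<otimes> inv (c \<otimes> u))"
      using subsetD[OF derived_U t] by (simp add: centralizer_singleton_iff)
    moreover have "coprime (ord (u \<otimes> c \<otimes> inv (c \<otimes> u))) p"
      using V_coprime subsetD[OF UV subsetD[OF derived_U_U t]] by simp
    ultimately have "u \<otimes> c = c \<otimes> u"
      by (rule commute_of_commutator_commute[OF _ c_carrier c_pow_p])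
    then show "u \<in> centralizer G {c}"
      using \<open>u \<in> carrier G\<close> by (simp add: centralizer_singleton_iff)
  qed
qed

theorem c_eq_one:
  assumes fin: "finite (carrier G)" and sol: "solvable G" and Op: "Op_trivial p G"
  shows "c = \<one>"
proof -
  obtain Q where Q: "Q \<lhd> G" "\<not> p dvd card Q"
    and max: "\<And>N. N \<lhd> G \<Longrightarrow> \<not> p dvd card N \<Longrightarrow> card N \<le> card Q"
    using exists_max_coprime_normal[OF fin prime_p] by blast
  have "\<forall>x\<in>Q. coprime (ord x) p"
    using coprime_ord_iff_not_dvd_card[OF fin normal_imp_subgroup[OF Q(1)] prime_p] Q(2) by blast
  then have "Q \<subseteq> centralizer G {c}"
    using normal_coprime_subset_centralizer[OF sol Q(1)] by blast
  then have "c \<in> centralizer G Q"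
    using c_carrier by (auto simp: centralizer_def centralizer_singleton_iff)
  then have "c \<in> Q"
    using centralizer_subset_max_coprime_normal[OF fin sol prime_p Op Q max] by blast
  then have "coprime (ord c) p"
    using coprime_ord_iff_not_dvd_card[OF fin normal_imp_subgroup[OF Q(1)] prime_p] Q(2) by blast
  moreover have "ord c dvd p"
    using pow_eq_id[OF c_carrier] c_pow_p by simp
  ultimately have "ord c = 1"
    by (metis coprime_common_divisor_nat dvd_refl)
  then show ?thesis
    using ord_eq_1[OF c_carrier] by simp
qed

end

section \<open>The subgroup generated by a and c\<close>

context group
begin

lemma generate_commuting_pair:
  fixes n :: nat
  assumes a: "a \<in> carrier G" and c: "c \<in> carrier G" and ac: "a \<otimes> c = c \<otimes> a"
    and a_n: "a [^] n = \<one>" and c_n: "c [^] n = \<one>" and n: "0 < n"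
  shows "generate G {c, a} \<subseteq> (\<lambda>(i, j). a [^] i \<otimes> c [^] j) ` ({..<n} \<times> {..<n})"
proof
  fix x assume "x \<in> generate G {c, a}"
  then have "\<exists>(i::nat) (j::nat). x = a [^] i \<otimes> c [^] j"
  proof (induction rule: generate.induct)
    case one
    show ?case
      by (rule exI[of _ 0], rule exI[of _ 0]) simp
  next
    case (incl h)
    then have "h = a [^] (0::nat) \<otimes> c [^] (1::nat) \<or> h = a [^] (1::nat) \<otimes> c [^] (0::nat)"
      using a c by auto
    then show ?case
      by blast
  next
    case (inv h)
    then have "inv h = a [^] (0::nat) \<otimes> c [^] (n - 1) \<or> inv h = a [^] (n - 1) \<otimes> c [^] (0::nat)"
      using a c a_n c_n n inv_eq_nat_pow by auto
    then show ?case
      by blast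
  next
    case (eng h1 h2)
    then obtain i j k l :: nat where "h1 = a [^] i \<otimes> c [^] j" "h2 = a [^] k \<otimes> c [^] l"
      by blast
    moreover have "c [^] j \<otimes> a [^] k = a [^] k \<otimes> c [^] j"
      using group_commutes_pow[OF group_commutes_pow[OF ac[symmetric] c a, symmetric] a] a c
      by simp
    ultimately have "h1 \<otimes> h2 = a [^] (i + k) \<otimes> c [^] (j + l)"
      using a c by (simp add: m_assoc nat_pow_mult[symmetric] m_assoc[of "c [^] j" "a [^] k", symmetric])
    then show ?case
      by blast
  qed
  then obtain i j :: nat where "x = a [^] i \<otimes> c [^] j"
    by blast
  then have "x = a [^] (i mod n) \<otimes> c [^] (j mod n)"
    by (simp add: nat_pow_mod_eq[OF a a_n] nat_pow_mod_eq[OF c c_n])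
  then show "x \<in> (\<lambda>(i, j). a [^] i \<otimes> c [^] j) ` ({..<n} \<times> {..<n})"
    using n by force
qed

lemma conj_class_inter_generate_subset:
  assumes p: "Factorial_Ring.prime p"
    and a: "a \<in> carrier G" "ord a = p" "a \<notin> derived G (carrier G)"
    and c: "c \<in> derived G (carrier G)" "c [^] p = \<one>" and ac: "a \<otimes> c = c \<otimes> a"
  shows "conj_class G a \<inter> generate G {c, a} \<subseteq> (\<lambda>m. a \<otimes> c [^] m) ` {..<p}"
proof
  let ?D = "derived G (carrier G)"
  have D: "?D \<lhd> G"
    by (rule derived_self_is_normal)
  have D_sub: "subgroup ?D G"
    using D by (rule normal_imp_subgroup)
  have cc: "c \<in> carrier G"
    using subgroup.mem_carrier[OF D_sub c(1)] .
  have p_pos: "0 < p"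
    using prime_gt_0_nat[OF p] .
  fix x assume x: "x \<in> conj_class G a \<inter> generate G {c, a}"
  then obtain g where g: "g \<in> carrier G" "x = g \<otimes> a \<otimes> inv g"
    by (auto simp: conj_class_def)
  obtain i j where ij: "i < p" "j < p" "x = a [^] i \<otimes> c [^] j"
    using x generate_commuting_pair[OF a(1) cc ac _ c(2) p_pos] a(1,2) by fastforce
  have "x \<otimes> inv a \<in> ?D"
    using commutator_in_derived[of g "carrier G" a] g a(1) by simp
  moreover have "a \<otimes> inv (c [^] j) \<otimes> inv a \<in> ?D"
    using normal.inv_op_closed2[OF D a(1)] subgroup.m_inv_closed[OF D_sub] subgroup_nat_pow_closed[OF D_sub c(1)]
    by blast
  ultimately have "(x \<otimes> inv a) \<otimes> (a \<otimes> inv (c [^] j) \<otimes> inv a) \<in> ?D"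
    using subgroup.m_closed[OF D_sub] by blast
  moreover have "(x \<otimes> inv a) \<otimes> (a \<otimes> inv (c [^] j) \<otimes> inv a) = a [^] i \<otimes> inv a"
    using ij(3) a(1) cc by (simp add: m_assoc)
  moreover have "a [^] i \<otimes> inv a = a [^] (i + (p - 1))"
    using inv_eq_nat_pow[OF a(1) _ p_pos] pow_ord_eq_1[OF a(1)] a by (simp add: nat_pow_mult)
  ultimately have "a [^] (i + (p - 1)) \<in> ?D"
    by simp
  then have "\<not> coprime (i + (p - 1)) p"
    using mem_subgroup_of_coprime_pow[OF D_sub a(1)] a(2,3) by auto
  then have "p dvd i + (p - 1)"
    using p by (metis coprime_commute prime_imp_coprime)
  then have "i = 1"
    using dvd_add_pred_imp_eq_1 prime_gt_1_nat[OF p] ij(1) by blast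
  then show "x \<in> (\<lambda>m. a \<otimes> c [^] m) ` {..<p}"
    using ij a(1) by auto
qed

lemma ne_one_of_card_generate:
  fixes p :: nat
  assumes a: "a \<in> carrier G" and c: "c \<in> carrier G" and ac: "a \<otimes> c = c \<otimes> a"
    and a_p: "a [^] p = \<one>" and c_p: "c [^] p = \<one>" and p: "1 < p"
    and card: "card (generate G {c, a}) = p ^ 2"
  shows "c \<noteq> \<one>"
proof
  assume "c = \<one>"
  then have "generate G {c, a} \<subseteq> (\<lambda>i. a [^] i) ` {..<p}"
    using generate_commuting_pair[OF a c ac a_p c_p] p a by auto
  then have "card (generate G {c, a}) \<le> p"
    using card_mono[OF finite_imageI[OF finite_lessThan]] card_image_le[OF finite_lessThan]
    by (metis card_lessThan order_trans)
  then show False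
    using card p by (simp add: power2_eq_square)
qed

lemma coset_subset_of_card_conj_class:
  fixes p m :: nat
  assumes A: "normal_subset A G" "a \<in> A" and c: "c \<in> carrier G" "c [^] p = \<one>" "0 < p"
    and sub: "conj_class G a \<inter> E \<subseteq> (\<lambda>m. a \<otimes> c [^] m) ` {..<p}"
    and card: "p \<le> card (conj_class G a \<inter> E)"
  shows "a \<otimes> c [^] m \<in> A"
proof -
  have "card ((\<lambda>m. a \<otimes> c [^] m) ` {..<p}) \<le> p"
    using card_image_le[OF finite_lessThan, of "\<lambda>m. a \<otimes> c [^] m" p] by simp
  then have "card ((\<lambda>m. a \<otimes> c [^] m) ` {..<p}) \<le> card (conj_class G a \<inter> E)"
    using card by linarith
  then have "conj_class G a \<inter> E = (\<lambda>m. a \<otimes> c [^] m) ` {..<p}"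
    using card_seteq[OF finite_imageI[OF finite_lessThan] sub] by simp
  then have "a \<otimes> c [^] (m mod p) \<in> conj_class G a"
    using c(3) by auto
  then obtain g where "g \<in> carrier G" "a \<otimes> c [^] (m mod p) = g \<otimes> a \<otimes> inv g"
    by (auto simp: conj_class_def)
  then show ?thesis
    using A c(1,2) by (simp add: normal_subset_def nat_pow_mod_eq)
qed

lemma normal_p_square_setI:
  assumes "Factorial_Ring.prime p" "normal_subset A G" "\<forall>x\<in>A. \<forall>y\<in>A. p_element p G (x \<otimes> y)"
  shows "normal_p_square_set G p A"
proof (intro normal_p_square_set.intro normal_p_square_set_axioms.intro is_group)
  fix x y assume "x \<in> A" "y \<in> A"
  then obtain k where "x \<otimes> y \<in> carrier G" "ord (x \<otimes> y) = p ^ k"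
    using assms(3) by (auto simp: p_element_def)
  then show "\<exists>k. (x \<otimes> y) [^] (p ^ k) = \<one>"
    by (metis pow_ord_eq_1)
qed (use assms in \<open>auto simp: normal_subset_def\<close>)

end

theorem lemma3p1:
  fixes G (structure) and p :: nat and A :: "'a set" and a c :: 'a
  assumes "Factorial_Ring.prime p"
    and "group G" and "finite (carrier G)" and "solvable G"
    and "Op_trivial p G"
    and "A \<noteq> {}" and "normal_subset A G"
    and "\<forall>x\<in>A. group.ord G x = p"
    and "\<forall>x\<in>A. \<forall>y\<in>A. p_element p G (x \<otimes> y)"
    and "a \<in> A" and "a \<notin> derived G (carrier G)"
    and "c \<in> derived G (carrier G)"
    and "elem_abelian_of_order p 2 (generate G {c, a}) G"
  shows "card (conj_class G a \<inter> generate G {c, a}) < p"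
proof -
  interpret normal_p_square_set G p A
    using group.normal_p_square_setI[OF assms(2,1,7,9)] .
  have a: "a \<in> carrier G" "ord a = p"
    using assms(8,10) A_subset by auto
  have c: "c \<in> carrier G"
    using subgroup.mem_carrier[OF normal_imp_subgroup[OF derived_self_is_normal] assms(12)] .
  have "a \<in> generate G {c, a}" "c \<in> generate G {c, a}"
    by (auto intro: generate.incl)
  then have ac: "a \<otimes> c = c \<otimes> a" and a_p: "a [^] p = \<one>" and c_p: "c [^] p = \<one>"
    and card: "card (generate G {c, a}) = p ^ 2"
    using assms(13) by (auto simp: elem_abelian_of_order_def)
  have sub: "conj_class G a \<inter> generate G {c, a} \<subseteq> (\<lambda>m. a \<otimes> c [^] m) ` {..<p}"
    by (rule conj_class_inter_generate_subset[OF prime_p a assms(11,12) c_p ac])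
  have "c \<noteq> \<one>"
    using ne_one_of_card_generate[OF a(1) c ac a_p c_p prime_gt_1_nat[OF prime_p] card] .
  show ?thesis
  proof (rule ccontr)
    assume "\<not> card (conj_class G a \<inter> generate G {c, a}) < p"
    then have "a \<otimes> c [^] m \<in> A" for m :: nat
      using coset_subset_of_card_conj_class[OF assms(7,10) c c_p prime_gt_0_nat[OF prime_p] sub] by simp
    then interpret p_square_coset G p A a c
      using a(1) c ac a_p c_p by unfold_locales
    show False
      using c_eq_one[OF assms(3-5)] \<open>c \<noteq> \<one>\<close> by blast
  qed
qed

end
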